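(* Let $p\in\mathbb N$ and let $f_1,\dots,f_p$ be infinitely differentiable functions of $t$. Define $g_{i+pn}=f^{(n)}_i$ for $i=1,\dots,p$, $n=0,1,2,\dots$, and $$f_{k+(p+1)m}=W(g_k,\dots,g_{k+m}),\qquad k=1,\dots,p+1,\ m=0,1,2,\dots$$ (this is consistent with the given $f_1,\dots,f_p$ for $m=0$), and set $f_{-p}=\dots=f_0=1$. Then the functions $f_j$, $j\ge -p$, satisfy $$f_{j-1}f'_j-f'_{j-1}f_j=f_{j-p-1}f_{j+p},\qquad j=1,2,\dots.$$
   Context: $W(y_0,\dots,y_m)=\det\bigl(y^{(i)}_j\bigr)_{i,j=0}^m$ denotes the Wronskian; $f^{(n)}$ is the $n$-th derivative with respect to $t$. *)

theory Defs
  imports "HOL-Analysis.Analysis" "Jordan_Normal_Form.Determinant"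
begin

definition nderiv :: "nat \<Rightarrow> (real \<Rightarrow> real) \<Rightarrow> (real \<Rightarrow> real)" where
  "nderiv n y = (deriv ^^ n) y"

definition smooth :: "(real \<Rightarrow> real) \<Rightarrow> bool" where
  "smooth y \<longleftrightarrow> (\<forall>n x. nderiv n y differentiable (at x))"

definition wronskian :: "nat \<Rightarrow> (nat \<Rightarrow> real \<Rightarrow> real) \<Rightarrow> real \<Rightarrow> real" where
  "wronskian m y t = det (mat (Suc m) (Suc m) (\<lambda>(i, j). nderiv i (y j) t))"

text \<open>g_{i+pn} = f_i^{(n)}, i = 1..p, n \<ge> 0; for index j \<ge> 1:
  i = (j-1) mod p + 1, n = (j-1) div p.\<close>
definition gseq :: "nat \<Rightarrow> (nat \<Rightarrow> real \<Rightarrow> real) \<Rightarrow> nat \<Rightarrow> real \<Rightarrow> real" where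
  "gseq p f j = nderiv ((j - 1) div p) (f ((j - 1) mod p + 1))"

text \<open>f_{k+(p+1)m} = W(g_k,...,g_{k+m}), k = 1..p+1, m \<ge> 0; f_j = 1 for -p \<le> j \<le> 0.
  (Values for j < -p are irrelevant and set to 1 as well.)\<close>
definition fseq :: "nat \<Rightarrow> (nat \<Rightarrow> real \<Rightarrow> real) \<Rightarrow> int \<Rightarrow> real \<Rightarrow> real" where
  "fseq p f j = (if j \<le> 0 then (\<lambda>_. 1) else
     (let k = nat ((j - 1) mod (int p + 1)) + 1;
          m = nat ((j - 1) div (int p + 1))
      in wronskian m (\<lambda>l. gseq p f (k + l))))"

end

theory Submission
  imports Defs "Jordan_Normal_Form.Char_Poly"
begin

(* Write j - 1 = k + (p+1) m with 0 <= k <= p and put g_0 = 1, y_l = g_(k+l). Then f_(j-1), f_j,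
   f_(j+p) and f_(j-p-1) are the Wronskians of y_0..y_m, y_1..y_(m+1), y_0..y_(m+1) and y_1..y_m;
   for k = 0 this uses W(1, y_1, ..., y_n) = W(y_1', ..., y_n') together with g_(i+p) = g_i'.
   The claim becomes the Jacobi identity
     W(y_0..y_m) W(y_1..y_(m+1))' - W(y_0..y_m)' W(y_1..y_(m+1)) = W(y_1..y_m) W(y_0..y_(m+1)),
   which is the Desnanot-Jacobi identity for the Wronskian matrix of y_0..y_(m+1): after moving
   y_0 to the second-to-last column, its four minors obtained by deleting one of the last two rows
   and one of the last two columns are W(y_0..y_m), W(y_1..y_(m+1)) and their derivatives, since
   differentiating a Wronskian amounts to differentiating its last row. *)

lemma det_mat_2x2:
  fixes A :: "'a::comm_ring_1 mat"
  assumes A: "A \<in> carrier_mat 2 2"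
  shows "det A = A $$ (0,0) * A $$ (1,1) - A $$ (0,1) * A $$ (1,0)"
proof -
  have "det A = A $$ (0,0) * cofactor A 0 0 + A $$ (1,0) * cofactor A 1 0"
    using laplace_expansion_column[OF A, of 0] by (simp add: numeral_2_eq_2)
  moreover have "cofactor A 0 0 = A $$ (1,1)" "cofactor A 1 0 = - A $$ (0,1)"
    unfolding cofactor_def using A by (subst det_single, auto simp: mat_delete_def)+
  ultimately show ?thesis by (simp add: algebra_simps)
qed

lemma mult_adj_mat_last_cols:
  fixes M :: "'a::comm_ring_1 mat"
  assumes M: "M \<in> carrier_mat N N"
  shows "M * mat N N (\<lambda>(i,j). if j < n then of_bool (i = j) else adj_mat M $$ (i,j))
    = mat N N (\<lambda>(i,j). if j < n then M $$ (i,j) else if i = j then det M else 0)"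
    (is "M * ?X = ?R")
proof (rule eq_matI)
  fix i j assume "i < dim_row ?R" "j < dim_col ?R"
  then have ij: "i < N" "j < N" by simp_all
  have col_X: "col ?X j = (if j < n then unit_vec N j else col (adj_mat M) j)"
    using ij adj_mat[OF M] by (auto intro!: eq_vecI)
  have "row M i \<bullet> col (adj_mat M) j = (M * adj_mat M) $$ (i,j)"
    using ij M adj_mat(1)[OF M] by (subst index_mult_mat) auto
  also have "\<dots> = (if i = j then det M else 0)"
    unfolding adj_mat(2)[OF M] using ij by simp
  finally show "(M * ?X) $$ (i,j) = ?R $$ (i,j)"
    using col_X ij M by (simp add: scalar_prod_right_unit)
qed (use M in auto)

lemma desnanot_jacobi_of_det_nonzero:
  fixes M :: "'a::idom mat"
  assumes M: "M \<in> carrier_mat (n+2) (n+2)" and nz: "det M \<noteq> 0"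
  shows "det M * det (mat_delete (mat_delete M (n+1) (n+1)) n n) =
    det (mat_delete M n n) * det (mat_delete M (n+1) (n+1))
    - det (mat_delete M n (n+1)) * det (mat_delete M (n+1) n)"
proof -
  \<comment> \<open>\<open>M X\<close> is block lower triangular, \<open>X\<close> block upper triangular\<close>
  define X where "X = mat (n+2) (n+2) (\<lambda>(i,j). if j < n then of_bool (i = j) else adj_mat M $$ (i,j))"
  define P where "P = mat n n (\<lambda>(i,j). M $$ (i,j))"
  define Q where "Q = mat 2 n (\<lambda>(i,j). M $$ (n+i, j))"
  define Y1 where "Y1 = mat n 2 (\<lambda>(i,j). adj_mat M $$ (i, n+j))"
  define Y2 where "Y2 = mat 2 2 (\<lambda>(i,j). adj_mat M $$ (n+i, n+j))"
  have MX: "M * X = four_block_mat P (0\<^sub>m n 2) Q (det M \<cdot>\<^sub>m 1\<^sub>m 2)"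
    unfolding X_def mult_adj_mat_last_cols[OF M]
    by (rule eq_matI) (auto simp: four_block_mat_def P_def Q_def Let_def)
  have X: "X = four_block_mat (1\<^sub>m n) Y1 (0\<^sub>m 2 n) Y2"
    by (rule eq_matI) (auto simp: four_block_mat_def X_def Y1_def Y2_def Let_def)
  have "det X = det Y2"
    unfolding X by (subst det_four_block_mat_lower_left_zero[of _ n _ 2]) (auto simp: Y1_def Y2_def)
  then have "det M * det Y2 = det (M * X)"
    using M by (simp add: det_mult X_def)
  also have "\<dots> = det M * (det P * det M)"
    unfolding MX
    by (subst det_four_block_mat_upper_right_zero[of _ n _ 2]) (auto simp: P_def Q_def power2_eq_square)
  finally have "det Y2 = det P * det M"
    using nz by simp
  moreover have "det Y2 = det (mat_delete M n n) * det (mat_delete M (n+1) (n+1))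
    - det (mat_delete M n (n+1)) * det (mat_delete M (n+1) n)"
    using M by (subst det_mat_2x2) (auto simp: Y2_def adj_mat_def cofactor_def)
  moreover have "P = mat_delete (mat_delete M (n+1) (n+1)) n n"
    using M by (auto intro!: eq_matI simp: P_def mat_delete_def)
  ultimately show ?thesis
    by (simp add: ac_simps)
qed

lemma map_mat_delete: "map_mat g (mat_delete A i j) = mat_delete (map_mat g A) i j"
  by (rule eq_matI) (auto simp: mat_delete_def)

lemma desnanot_jacobi:
  fixes M :: "'a::idom mat"
  assumes M: "M \<in> carrier_mat (n+2) (n+2)"
  shows "det M * det (mat_delete (mat_delete M (n+1) (n+1)) n n) =
    det (mat_delete M n n) * det (mat_delete M (n+1) (n+1))
    - det (mat_delete M n (n+1)) * det (mat_delete M (n+1) n)"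
proof -
  have eval0: "comm_ring_hom (\<lambda>p::'a poly. poly p 0)"
    by standard simp_all
  \<comment> \<open>\<open>?L\<close> has a monic determinant and evaluates to \<open>M\<close> at 0\<close>
  let ?L = "char_poly_matrix (-M)"
  have L: "?L \<in> carrier_mat (n+2) (n+2)"
    using M by simp
  have "monic (det ?L)"
    using degree_monic_char_poly[of "-M" "n+2"] M unfolding char_poly_def by simp
  then have "det ?L \<noteq> 0"
    by auto
  moreover have "map_mat (\<lambda>p. poly p 0) ?L = M"
    using M by (auto intro!: eq_matI simp: char_poly_matrix_def)
  ultimately show ?thesis
    using arg_cong[OF desnanot_jacobi_of_det_nonzero[OF L], of "\<lambda>p. poly p 0"]
    unfolding poly_mult poly_diff comm_ring_hom.hom_det[OF eval0, symmetric] map_mat_delete by simp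
qed

lemma det_mat_eq_sum_permutes:
  "det (mat n n (\<lambda>(i,j). B i j)) = (\<Sum>p | p permutes {0..<n}. signof p * (\<Prod>i=0..<n. B i (p i)))"
  by (subst det_def'[of _ n], simp, intro sum.cong refl arg_cong2[of _ _ _ _ "(*)"] prod.cong,
      auto simp: permutes_in_image)

lemma has_real_derivative_det:
  fixes A :: "nat \<Rightarrow> nat \<Rightarrow> real \<Rightarrow> real" and A' :: "nat \<Rightarrow> nat \<Rightarrow> real"
  assumes "\<And>i j. i < n \<Longrightarrow> j < n \<Longrightarrow> (A i j has_real_derivative A' i j) (at t)"
  shows "((\<lambda>x. det (mat n n (\<lambda>(i,j). A i j x))) has_real_derivative
     (\<Sum>k<n. det (mat n n (\<lambda>(i,j). if i = k then A' i j else A i j t)))) (at t)"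
proof -
  let ?P = "{p. p permutes {0..<n}}"
  have "((\<lambda>x. \<Sum>p\<in>?P. signof p * (\<Prod>i=0..<n. A i (p i) x)) has_real_derivative
     (\<Sum>p\<in>?P. signof p * (\<Sum>k\<in>{0..<n}. A' k (p k) * (\<Prod>i\<in>{0..<n}-{k}. A i (p i) t)))) (at t)"
    using assms by (intro DERIV_sum DERIV_cmult has_field_derivative_prod) (auto simp: permutes_in_image)
  moreover have "A' k (p k) * (\<Prod>i\<in>{0..<n}-{k}. A i (p i) t)
      = (\<Prod>i=0..<n. if i = k then A' i (p i) else A i (p i) t)" if "k < n" for k p
    using that by (auto simp: prod.remove[of "{0..<n}" k] intro!: prod.cong)
  ultimately show ?thesis
    unfolding det_mat_eq_sum_permutes sum_distrib_left
    by (subst (asm) sum.swap) (simp add: atLeast0LessThan)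
qed

lemma nderiv_0 [simp]: "nderiv 0 y = y"
  by (simp add: nderiv_def)

lemma nderiv_Suc: "nderiv (Suc i) y = deriv (nderiv i y)"
  by (simp add: nderiv_def)

lemma nderiv_Suc_right: "nderiv (Suc i) y = nderiv i (deriv y)"
  by (simp only: nderiv_def funpow_Suc_right o_apply)

lemma nderiv_nderiv: "nderiv i (nderiv j y) = nderiv (i + j) y"
  by (simp add: nderiv_def funpow_add)

lemma nderiv_const: "nderiv i (\<lambda>_. c) = (if i = 0 then (\<lambda>_. c) else (\<lambda>_. 0))"
  by (induction i) (auto simp: nderiv_Suc)

lemma smooth_const: "smooth (\<lambda>_. c)"
  by (simp add: smooth_def nderiv_const)

lemma smooth_nderiv: "smooth y \<Longrightarrow> smooth (nderiv n y)"
  by (simp add: smooth_def nderiv_nderiv)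

lemma nderiv_has_real_derivative:
  "smooth y \<Longrightarrow> (nderiv i y has_real_derivative nderiv (Suc i) y t) (at t)"
  by (simp add: smooth_def nderiv_Suc DERIV_deriv_iff_real_differentiable)

text \<open>Unlike \<^const>\<open>wronskian\<close>, the first argument counts the functions, so the empty
  Wronskian (\<open>n = 0\<close>) is 1.\<close>

definition wronskian_first :: "nat \<Rightarrow> (nat \<Rightarrow> real \<Rightarrow> real) \<Rightarrow> real \<Rightarrow> real" where
  "wronskian_first n y t = det (mat n n (\<lambda>(i,j). nderiv i (y j) t))"

lemma wronskian_eq_wronskian_first: "wronskian m y = wronskian_first (Suc m) y"
  by (simp add: wronskian_def wronskian_first_def fun_eq_iff)

lemma wronskian_first_0 [simp]: "wronskian_first 0 y = (\<lambda>_. 1)"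
  by (simp add: wronskian_first_def fun_eq_iff)

lemma wronskian_first_cong:
  "(\<And>j. j < n \<Longrightarrow> y j = y' j) \<Longrightarrow> wronskian_first n y = wronskian_first n y'"
  unfolding wronskian_first_def by (intro ext arg_cong[of _ _ det] eq_matI) auto

lemma wronskian_first_has_real_derivative:
  assumes "\<And>j. j \<le> m \<Longrightarrow> smooth (y j)"
  shows "(wronskian_first (Suc m) y has_real_derivative
     det (mat (Suc m) (Suc m) (\<lambda>(i,j). nderiv (if i = m then Suc m else i) (y j) t))) (at t)"
proof -
  let ?D = "\<lambda>k. det (mat (Suc m) (Suc m)
    (\<lambda>(i,j). if i = k then nderiv (Suc i) (y j) t else nderiv i (y j) t))"
  have "(wronskian_first (Suc m) y has_real_derivative (\<Sum>k<Suc m. ?D k)) (at t)"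
    unfolding wronskian_first_def[abs_def]
    using assms by (intro has_real_derivative_det nderiv_has_real_derivative) simp
  moreover have "?D k = 0" if "k < m" for k
    \<comment> \<open>differentiating row \<open>k\<close> duplicates row \<open>k + 1\<close>\<close>
    using that by (intro det_identical_rows[of _ "Suc m" k "Suc k"]) (auto intro!: eq_vecI)
  moreover have "?D m = det (mat (Suc m) (Suc m) (\<lambda>(i,j). nderiv (if i = m then Suc m else i) (y j) t))"
    by (intro arg_cong[of _ _ det] eq_matI) auto
  ultimately show ?thesis
    by simp
qed

lemma wronskian_first_jacobi_last:
  assumes "\<And>j. j \<le> n + 1 \<Longrightarrow> smooth (z j)"
  defines "z' \<equiv> z(n := z (n + 1))"
  shows "wronskian_first (n+1) z t * deriv (wronskian_first (n+1) z') t
       - deriv (wronskian_first (n+1) z) t * wronskian_first (n+1) z' t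
       = wronskian_first n z t * wronskian_first (n+2) z t"
proof -
  define M where "M = mat (n+2) (n+2) (\<lambda>(i,j). nderiv i (z j) t)"
  have M: "M \<in> carrier_mat (n+2) (n+2)"
    by (simp add: M_def)
  have "det M = wronskian_first (n+2) z t"
    by (simp add: M_def wronskian_first_def)
  moreover have "det (mat_delete M (n+1) (n+1)) = wronskian_first (n+1) z t"
    unfolding wronskian_first_def
    by (intro arg_cong[of _ _ det] eq_matI) (auto simp: M_def mat_delete_def)
  moreover have "det (mat_delete (mat_delete M (n+1) (n+1)) n n) = wronskian_first n z t"
    unfolding wronskian_first_def
    by (intro arg_cong[of _ _ det] eq_matI) (auto simp: M_def mat_delete_def)
  moreover have "det (mat_delete M (n+1) n) = wronskian_first (n+1) z' t"
    unfolding wronskian_first_def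
    by (intro arg_cong[of _ _ det] eq_matI) (auto simp: M_def mat_delete_def z'_def)
  moreover have "det (mat_delete M n n) = deriv (wronskian_first (n+1) z') t"
    using DERIV_imp_deriv[OF wronskian_first_has_real_derivative, of n z'] assms
    by (auto intro!: arg_cong[of _ _ det] eq_matI simp: M_def mat_delete_def z'_def)
  moreover have "det (mat_delete M n (n+1)) = deriv (wronskian_first (n+1) z) t"
    using DERIV_imp_deriv[OF wronskian_first_has_real_derivative, of n z] assms
    by (auto intro!: arg_cong[of _ _ det] eq_matI simp: M_def mat_delete_def)
  ultimately show ?thesis
    using desnanot_jacobi[OF M] by (simp add: ac_simps)
qed

lemma wronskian_first_rotate:
  assumes "n + 1 \<le> N"
  shows "wronskian_first N (\<lambda>l. y (if l < n then l + 1 else if l = n then 0 else l))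
    = (\<lambda>t. (-1) ^ n * wronskian_first N y t)"
proof
  fix t
  define A where "A = mat N N (\<lambda>(i,j). nderiv i (y j) t)"
  have "det A = (-1) ^ (1 * n) *
    det (mat N N (\<lambda>(i,j). A $$ (i, if j < n then j + 1 else if j < 1 + n then j - n else j)))"
    using assms by (intro det_swap_initial_cols) (auto simp: A_def)
  also have "mat N N (\<lambda>(i,j). A $$ (i, if j < n then j + 1 else if j < 1 + n then j - n else j))
    = mat N N (\<lambda>(i,j). nderiv i (y (if j < n then j + 1 else if j = n then 0 else j)) t)"
    using assms by (intro eq_matI) (auto simp: A_def)
  finally show "wronskian_first N (\<lambda>l. y (if l < n then l + 1 else if l = n then 0 else l)) t
    = (-1) ^ n * wronskian_first N y t"
    by (simp add: wronskian_first_def A_def flip: power_mult_distrib)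
qed

lemma wronskian_first_jacobi:
  assumes "\<And>j. j \<le> n + 1 \<Longrightarrow> smooth (y j)"
  shows "wronskian_first (n+1) y t * deriv (wronskian_first (n+1) (\<lambda>l. y (l+1))) t
       - deriv (wronskian_first (n+1) y) t * wronskian_first (n+1) (\<lambda>l. y (l+1)) t
       = wronskian_first n (\<lambda>l. y (l+1)) t * wronskian_first (n+2) y t"
proof -
  define z where "z = (\<lambda>l. y (if l < n then l + 1 else if l = n then 0 else l))"
  have shift: "wronskian_first (n+1) (z(n := z (n+1))) = wronskian_first (n+1) (\<lambda>l. y (l+1))"
    "wronskian_first n z = wronskian_first n (\<lambda>l. y (l+1))"
    by (auto intro: wronskian_first_cong simp: z_def)
  have rotate: "wronskian_first (n+1) z = (\<lambda>t. (-1) ^ n * wronskian_first (n+1) y t)"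
    "wronskian_first (n+2) z = (\<lambda>t. (-1) ^ n * wronskian_first (n+2) y t)"
    unfolding z_def by (simp_all add: wronskian_first_rotate)
  have deriv_rotate: "deriv (\<lambda>t. (-1) ^ n * wronskian_first (n+1) y t) t
      = (-1) ^ n * deriv (wronskian_first (n+1) y) t"
    using assms wronskian_first_has_real_derivative[of n y t]
    by (intro deriv_cmult) (auto simp: field_differentiable_def)
  have "wronskian_first (n+1) z t * deriv (wronskian_first (n+1) (z(n := z (n+1)))) t
      - deriv (wronskian_first (n+1) z) t * wronskian_first (n+1) (z(n := z (n+1))) t
      = wronskian_first n z t * wronskian_first (n+2) z t"
    using assms by (intro wronskian_first_jacobi_last) (simp add: z_def)
  then have "(-1) ^ n * (wronskian_first (n+1) y t * deriv (wronskian_first (n+1) (\<lambda>l. y (l+1))) t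
       - deriv (wronskian_first (n+1) y) t * wronskian_first (n+1) (\<lambda>l. y (l+1)) t)
     = (-1) ^ n * (wronskian_first n (\<lambda>l. y (l+1)) t * wronskian_first (n+2) y t)"
    unfolding shift rotate deriv_rotate by (simp add: algebra_simps)
  then show ?thesis
    by simp
qed

lemma wronskian_first_const_front:
  assumes "y 0 = (\<lambda>_. 1)"
  shows "wronskian_first (Suc n) y = wronskian_first n (\<lambda>l. deriv (y (Suc l)))"
proof
  fix t
  define M where "M = mat (Suc n) (Suc n) (\<lambda>(i,j). nderiv i (y j) t)"
  have M: "M \<in> carrier_mat (Suc n) (Suc n)"
    by (simp add: M_def)
  have "det M = (\<Sum>i<Suc n. M $$ (i,0) * cofactor M i 0)"
    using laplace_expansion_column[OF M] by simp
  also have "\<dots> = (\<Sum>i<Suc n. if i = 0 then cofactor M 0 0 else 0)"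
    by (rule sum.cong) (auto simp: M_def assms nderiv_const)
  also have "\<dots> = cofactor M 0 0"
    by simp
  also have "\<dots> = det (mat n n (\<lambda>(i,j). nderiv i (deriv (y (Suc j))) t))"
    unfolding cofactor_def
    by (auto intro!: arg_cong[of _ _ det] eq_matI simp: M_def mat_delete_def nderiv_Suc_right)
  finally show "wronskian_first (Suc n) y t = wronskian_first n (\<lambda>l. deriv (y (Suc l))) t"
    by (simp add: wronskian_first_def M_def)
qed

lemma smooth_gseq:
  assumes "1 \<le> p" and "\<And>i. i \<in> {1..p} \<Longrightarrow> smooth (f i)"
  shows "smooth (gseq p f l)"
proof -
  have "(l - 1) mod p + 1 \<in> {1..p}"
    using assms(1) by (simp add: Suc_leI)
  then show ?thesis
    unfolding gseq_def by (intro smooth_nderiv assms(2))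
qed

lemma gseq_add_self:
  assumes "1 \<le> p" and "1 \<le> i"
  shows "gseq p f (i + p) = deriv (gseq p f i)"
proof -
  have i: "i + p - 1 = (i - 1) + p"
    using assms by simp
  have "(i + p - 1) div p = Suc ((i - 1) div p)" "(i + p - 1) mod p = (i - 1) mod p"
    unfolding i using assms(1) by simp_all
  then show ?thesis
    by (simp add: gseq_def nderiv_Suc)
qed

text \<open>Adjoins \<open>g\<^sub>0 = 1\<close>; \<^const>\<open>gseq\<close> itself is junk at index 0.\<close>

definition gseq_ext :: "nat \<Rightarrow> (nat \<Rightarrow> real \<Rightarrow> real) \<Rightarrow> nat \<Rightarrow> real \<Rightarrow> real" where
  "gseq_ext p f j = (if j = 0 then (\<lambda>_. 1) else gseq p f j)"

lemma smooth_gseq_ext: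
  "1 \<le> p \<Longrightarrow> (\<And>i. i \<in> {1..p} \<Longrightarrow> smooth (f i)) \<Longrightarrow> smooth (gseq_ext p f l)"
  by (auto simp: gseq_ext_def smooth_const intro: smooth_gseq)

lemma fseq_nonpos: "j \<le> 0 \<Longrightarrow> fseq p f j = (\<lambda>_. 1)"
  by (simp add: fseq_def)

lemma fseq_eq_wronskian:
  assumes "1 \<le> k" and "k \<le> p + 1"
  shows "fseq p f (int k + (int p + 1) * int m) = wronskian m (\<lambda>l. gseq p f (k + l))"
proof -
  have j: "int k + (int p + 1) * int m - 1 = (int k - 1) + int m * (int p + 1)"
    by (simp add: algebra_simps)
  have "(int k + (int p + 1) * int m - 1) mod (int p + 1) = int k - 1"
    "(int k + (int p + 1) * int m - 1) div (int p + 1) = int m"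
    unfolding j using assms by simp_all
  moreover have "Suc (nat (int k - 1) + l) = k + l" for l
    using assms by simp
  moreover have "\<not> int k + (int p + 1) * int m \<le> 0"
    using assms zero_le_mult_iff[of "int p + 1" "int m"] by linarith
  ultimately show ?thesis
    by (simp add: fseq_def Let_def)
qed

lemma fseq_eq_wronskian_first_gseq:
  assumes "1 \<le> k" and "k \<le> p + 1"
  shows "fseq p f (int k + (int p + 1) * (int m - 1)) = wronskian_first m (\<lambda>l. gseq p f (k + l))"
proof (cases m)
  case 0
  then show ?thesis
    using assms by (simp add: fseq_nonpos)
next
  case (Suc m')
  then show ?thesis
    using fseq_eq_wronskian[OF assms, where f = f and m = m'] by (simp add: wronskian_eq_wronskian_first)
qed

lemma fseq_eq_wronskian_first:
  assumes p: "1 \<le> p" and k: "k \<le> p + 1"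
  shows "fseq p f (int k + (int p + 1) * (int m - 1)) = wronskian_first m (\<lambda>l. gseq_ext p f (k + l))"
proof (cases "k = 0")
  case False
  then have "(\<lambda>l. gseq_ext p f (k + l)) = (\<lambda>l. gseq p f (k + l))"
    by (simp add: gseq_ext_def)
  then show ?thesis
    using False k fseq_eq_wronskian_first_gseq[of k p f m] by simp
next
  case True
  show ?thesis
  proof (cases m)
    case 0
    then show ?thesis
      using True by (simp add: fseq_nonpos)
  next
    case (Suc m')
    have "(\<lambda>l. deriv (gseq_ext p f (Suc l))) = (\<lambda>l. gseq p f (p + 1 + l))"
      using gseq_add_self[OF p, of "Suc _" f] by (simp add: gseq_ext_def add_ac)
    then have "wronskian_first m (gseq_ext p f) = wronskian_first m' (\<lambda>l. gseq p f (p + 1 + l))"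
      using Suc by (simp add: wronskian_first_const_front gseq_ext_def)
    moreover have "int k + (int p + 1) * (int m - 1) = int (p + 1) + (int p + 1) * (int m' - 1)"
      using True Suc by (simp add: algebra_simps)
    ultimately show ?thesis
      using True fseq_eq_wronskian_first_gseq[of "p + 1" p f m'] by simp
  qed
qed

theorem proposition4:
  fixes p :: nat and f :: "nat \<Rightarrow> real \<Rightarrow> real"
  assumes "p \<ge> 1"
    and "\<And>i. i \<in> {1..p} \<Longrightarrow> smooth (f i)"
    and "(j::int) \<ge> 1"
  shows "fseq p f (j - 1) t * deriv (fseq p f j) t - deriv (fseq p f (j - 1)) t * fseq p f j t
         = fseq p f (j - p - 1) t * fseq p f (j + p) t"
proof -
  obtain N where N: "j - 1 = int N"
    using assms(3) nonneg_int_cases[of "j - 1"] by auto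
  define k m where "k = N mod (p + 1)" and "m = N div (p + 1)"
  have "k < p + 1"
    by (simp add: k_def)
  then have k: "k \<le> p"
    by simp
  have "N = k + (p + 1) * m"
    unfolding k_def m_def by (rule mod_mult_div_eq[symmetric])
  then have "j - 1 = int k + (int p + 1) * int m"
    using N by (simp add: algebra_simps)
  then have idx: "j - 1 = int k + (int p + 1) * (int (m + 1) - 1)"
    "j = int (k + 1) + (int p + 1) * (int (m + 1) - 1)"
    "j + p = int k + (int p + 1) * (int (m + 2) - 1)"
    "j - p - 1 = int (k + 1) + (int p + 1) * (int m - 1)"
    by (simp_all add: algebra_simps)
  define y where "y = (\<lambda>l. gseq_ext p f (k + l))"
  have shift: "(\<lambda>l. y (l + 1)) = (\<lambda>l. gseq_ext p f (k + 1 + l))"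
    by (simp add: y_def add_ac)
  have "fseq p f (j - 1) = wronskian_first (m + 1) y"
    unfolding idx(1) y_def using k by (intro fseq_eq_wronskian_first assms(1)) simp
  moreover have "fseq p f j = wronskian_first (m + 1) (\<lambda>l. y (l + 1))"
    unfolding idx(2) shift using k by (intro fseq_eq_wronskian_first assms(1)) simp
  moreover have "fseq p f (j + p) = wronskian_first (m + 2) y"
    unfolding idx(3) y_def using k by (intro fseq_eq_wronskian_first assms(1)) simp
  moreover have "fseq p f (j - p - 1) = wronskian_first m (\<lambda>l. y (l + 1))"
    unfolding idx(4) shift using k by (intro fseq_eq_wronskian_first assms(1)) simp
  moreover have "\<And>l. smooth (y l)"
    using smooth_gseq_ext[OF assms(1,2)] by (simp add: y_def)
  ultimately show ?thesis
    using wronskian_first_jacobi[of m y t] by simp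
qed

end
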